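(* Let $G$ be a threshold graph with $n\ge3$ vertices and $\mathrm{seq}(G)=s_1s_2\cdots s_{n-1}$. Then $G$ is Hamiltonian if and only if $s_{n-1}=1$ and $h(s_1s_2\cdots s_{n-2})=0$.
   Context: A threshold graph on $n\ge1$ vertices is built from a base vertex $v_0$ by successively adding $v_1,\dots,v_{n-1}$, each either isolated (adjacent to no earlier vertex) or dominating (adjacent to all earlier vertices); its creation sequence $\mathrm{seq}(G)=s_1\cdots s_{n-1}$ has $s_i=1$ if $v_i$ is dominating and $s_i=0$ otherwise. For a binary string $s=s_1\cdots s_m$ and $0\le k\le m$, the $k$-th tail is $s_{m-k+1}\cdots s_m$ (empty for $k=0$); $z_k(s)$, $u_k(s)$ are the numbers of zeros and ones in it, and $h(s)=\max_{0\le k\le m}\{z_k(s)-u_k(s)\}$. *)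

theory Defs
  imports Main
begin

(* Binary strings are bool lists: True = 1 (dominating), False = 0 (isolated).
   A creation sequence s = s_1 ... s_{n-1} is the list [s_1, ..., s_{n-1}],
   so s_i = s ! (i - 1). *)

definition tail_k :: "nat \<Rightarrow> bool list \<Rightarrow> bool list" where
  "tail_k k s = drop (length s - k) s"

definition zeros :: "nat \<Rightarrow> bool list \<Rightarrow> nat" where
  "zeros k s = length (filter (\<lambda>b. \<not> b) (tail_k k s))"

definition ones :: "nat \<Rightarrow> bool list \<Rightarrow> nat" where
  "ones k s = length (filter (\<lambda>b. b) (tail_k k s))"

definition h :: "bool list \<Rightarrow> int" where
  "h s = Max {int (zeros k s) - int (ones k s) | k. k \<le> length s}"

(* Threshold graph with creation sequence s: vertices v_0,...,v_{length s}
   represented by 0..length s; for i < j, v_i v_j is an edge iff v_j is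
   dominating, i.e. s_j = 1, i.e. s ! (j - 1). *)
definition tg_vertices :: "bool list \<Rightarrow> nat set" where
  "tg_vertices s = {0..length s}"

definition tg_adj :: "bool list \<Rightarrow> nat \<Rightarrow> nat \<Rightarrow> bool" where
  "tg_adj s i j \<longleftrightarrow> i \<in> tg_vertices s \<and> j \<in> tg_vertices s \<and> i \<noteq> j \<and>
     s ! (max i j - 1)"

definition hamiltonian :: "'a set \<Rightarrow> ('a \<Rightarrow> 'a \<Rightarrow> bool) \<Rightarrow> bool" where
  "hamiltonian V E \<longleftrightarrow> (\<exists>c. distinct c \<and> set c = V \<and> length c \<ge> 3 \<and>
      (\<forall>i < length c - 1. E (c ! i) (c ! Suc i)) \<and> E (last c) (hd c))"

end

theory Submission
  imports Defs
begin

text \<open>Write \<open>s = t b\<close>. If \<open>b = 1\<close> and no tail of \<open>t\<close> has more zeros than ones, build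
  the graph of \<open>t\<close> vertex by vertex while keeping a cover by few vertex-disjoint paths: an
  isolated vertex adds a trivial path, a dominating vertex joins two paths into one. The number
  of paths stays below one plus the largest excess of zeros over ones in a tail, so the graph of
  \<open>t\<close> has a Hamiltonian path, which the dominating last vertex closes into a cycle. Conversely, on a Hamiltonian cycle both neighbours
  of an isolated vertex \<open>v\<^sub>x\<close> with \<open>x > a\<close> are dominating vertices \<open>v\<^sub>y\<close> with
  \<open>y > a\<close>; since \<open>v\<^sub>0\<close> is neither, a counting argument along the cycle shows that
  every nonempty tail of \<open>s\<close> has more ones than zeros.\<close>

definition path_cover :: "('a \<Rightarrow> 'a \<Rightarrow> bool) \<Rightarrow> 'a set \<Rightarrow> 'a list list \<Rightarrow> bool" where
  "path_cover E V ps \<longleftrightarrow>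
     distinct (concat ps) \<and> set (concat ps) = V \<and> (\<forall>p \<in> set ps. p \<noteq> [] \<and> successively E p)"

lemma path_cover_mono:
  assumes "path_cover E V ps" and "\<And>x y. x \<in> V \<Longrightarrow> y \<in> V \<Longrightarrow> E x y \<Longrightarrow> E' x y"
  shows "path_cover E' V ps"
  unfolding path_cover_def
proof (intro conjI ballI)
  fix p assume "p \<in> set ps"
  with assms(1) have "successively E p" and "set p \<subseteq> V"
    by (auto simp: path_cover_def)
  then show "successively E' p"
    by (blast intro: successively_mono assms(2))
qed (use assms(1) in \<open>auto simp: path_cover_def\<close>)

lemma path_cover_insert_isolated:
  assumes "path_cover E V ps" and "w \<notin> V"
  shows "path_cover E (insert w V) (ps @ [[w]])"
  using assms by (auto simp: path_cover_def)

lemma path_cover_insert_dominating: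
  assumes cover: "path_cover E V ps" and "w \<notin> V"
    and dom: "\<And>x. x \<in> V \<Longrightarrow> E x w \<and> E w x"
  obtains ps' where "path_cover E (insert w V) ps'" and "length ps' \<le> max 1 (length ps - 1)"
proof -
  have paths: "successively E p" "E (last p) w" "E w (hd p)" if "p \<in> set ps" for p
  proof -
    have "p \<noteq> []" "successively E p" "set p \<subseteq> V"
      using cover that by (auto simp: path_cover_def)
    moreover have "last p \<in> V" "hd p \<in> V"
      using \<open>p \<noteq> []\<close> \<open>set p \<subseteq> V\<close> by auto
    ultimately show "successively E p" "E (last p) w" "E w (hd p)"
      using dom by auto
  qed
  consider "ps = []" | p where "ps = [p]" | p q rest where "ps = p # q # rest"
    by (metis list.exhaust)
  then show thesis
  proof cases
    case 1
    with cover have "path_cover E (insert w V) [[w]]" by (simp add: path_cover_def)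
    with 1 show thesis using that by fastforce
  next
    case (2 p)
    with paths[of p] have "successively E (p @ [w])"
      by (auto simp: successively_append_iff)
    with 2 cover \<open>w \<notin> V\<close> have "path_cover E (insert w V) [p @ [w]]"
      by (auto simp: path_cover_def)
    with 2 show thesis using that by fastforce
  next
    case (3 p q rest)
    with paths[of p] paths[of q] have "successively E (p @ w # q)"
      by (cases q) (auto simp: successively_append_iff)
    with 3 cover \<open>w \<notin> V\<close> have "path_cover E (insert w V) ((p @ w # q) # rest)"
      by (auto simp: path_cover_def)
    with 3 show thesis using that by fastforce
  qed
qed

lemma hamiltonian_insert_dominating:
  assumes "path_cover E V [p]" and "card V \<ge> 2" and "w \<notin> V"
    and dom: "\<And>x. x \<in> V \<Longrightarrow> E x w \<and> E w x"
  shows "hamiltonian (insert w V) E"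
  unfolding hamiltonian_def
proof (intro exI conjI)
  have p: "distinct p" "set p = V" "p \<noteq> []" "successively E p"
    using assms(1) by (auto simp: path_cover_def)
  show "distinct (p @ [w])" "set (p @ [w]) = insert w V"
    using p \<open>w \<notin> V\<close> by auto
  show "3 \<le> length (p @ [w])"
    using p \<open>card V \<ge> 2\<close> distinct_card[of p] by simp
  have "successively E (p @ [w])"
    using p dom[of "last p"] by (auto simp: successively_append_iff)
  then show "\<forall>i < length (p @ [w]) - 1. E ((p @ [w]) ! i) ((p @ [w]) ! Suc i)"
    by (auto simp: successively_conv_nth)
  show "E (last (p @ [w])) (hd (p @ [w]))"
    using p dom[of "hd p"] by auto
qed

lemma hamiltonianE:
  assumes "hamiltonian V E"
  obtains c where "distinct c" "set c = V"
    and "\<And>i. i < length c \<Longrightarrow> E (c ! i) (c ! (Suc i mod length c))"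
proof -
  obtain c where c: "distinct c" "set c = V" "length c \<ge> 3"
    "\<forall>i < length c - 1. E (c ! i) (c ! Suc i)" "E (last c) (hd c)"
    using assms by (auto simp: hamiltonian_def)
  have "E (c ! i) (c ! (Suc i mod length c))" if "i < length c" for i
  proof (cases "Suc i = length c")
    case True
    moreover have "c \<noteq> []"
      using c(3) by auto
    then have "last c = c ! i" "hd c = c ! 0"
      by (simp_all add: last_conv_nth hd_conv_nth True[symmetric])
    ultimately show ?thesis
      using c(5) by simp
  next
    case False
    with c(4) that show ?thesis by simp
  qed
  with c(1,2) show thesis by (rule that)
qed

lemma card_positions:
  assumes "distinct c" and "X \<subseteq> set c"
  shows "card {i. i < length c \<and> c ! i \<in> X} = card X"
proof -
  have "X = (!) c ` {i. i < length c \<and> c ! i \<in> X}"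
    using assms(2) by (auto simp: in_set_conv_nth subset_iff)
  moreover have "inj_on ((!) c) {i. i < length c \<and> c ! i \<in> X}"
    using assms(1) by (simp add: inj_on_nth)
  ultimately show ?thesis
    by (metis card_image)
qed

lemma inj_on_Suc_mod: "inj_on (\<lambda>p. Suc p mod L) {..<L}"
proof (rule inj_onI)
  fix p q assume "p \<in> {..<L}" "q \<in> {..<L}" "Suc p mod L = Suc q mod L"
  then show "p = q"
    by (cases "Suc p = L"; cases "Suc q = L") auto
qed

text \<open>The successor map embeds \<open>P\<close> into \<open>Q\<close>, and it misses the first position of
  \<open>P \<union> Q\<close> after a position outside \<open>P \<union> Q\<close>, which must lie in \<open>Q\<close>.\<close>

lemma card_lt_card_if_flanked_in_cycle:
  fixes L :: nat
  assumes "P \<subseteq> {..<L}" "Q \<subseteq> {..<L}"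
    and succ: "\<And>p. p \<in> P \<Longrightarrow> Suc p mod L \<in> Q"
    and pred: "\<And>p. p < L \<Longrightarrow> Suc p mod L \<in> P \<Longrightarrow> p \<in> Q"
    and "i < L" "i \<in> P \<union> Q" "j < L" "j \<notin> P \<union> Q"
  shows "card P < card Q"
proof -
  define R where "R k \<longleftrightarrow> (j + k) mod L \<in> P \<union> Q" for k
  have "R (i + L - j)" "\<not> R 0"
    using \<open>i < L\<close> \<open>j < L\<close> \<open>i \<in> P \<union> Q\<close> \<open>j \<notin> P \<union> Q\<close> by (simp_all add: R_def)
  then obtain k where "\<not> R k" "R (Suc k)"
    using ex_least_nat_less[of R] by blast
  define p where "p = (j + k) mod L"
  have "p < L" "p \<notin> P \<union> Q" "Suc p mod L \<in> P \<union> Q"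
    using \<open>\<not> R k\<close> \<open>R (Suc k)\<close> \<open>j < L\<close> by (simp_all add: R_def p_def mod_Suc_eq)
  have "Suc p mod L \<in> Q - (\<lambda>p. Suc p mod L) ` P"
  proof -
    have "Suc p mod L \<notin> (\<lambda>p. Suc p mod L) ` P"
    proof
      assume "Suc p mod L \<in> (\<lambda>p. Suc p mod L) ` P"
      then obtain p' where "p' \<in> P" "Suc p' mod L = Suc p mod L" by (elim imageE) simp
      then have "p' = p"
        using inj_on_Suc_mod[of L] \<open>P \<subseteq> {..<L}\<close> \<open>p < L\<close> by (auto dest: inj_onD)
      with \<open>p' \<in> P\<close> \<open>p \<notin> P \<union> Q\<close> show False by simp
    qed
    moreover have "Suc p mod L \<notin> P"
      using pred \<open>p < L\<close> \<open>p \<notin> P \<union> Q\<close> by blast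
    ultimately show ?thesis
      using \<open>Suc p mod L \<in> P \<union> Q\<close> by blast
  qed
  with succ have "(\<lambda>p. Suc p mod L) ` P \<subset> Q" by blast
  then have "card ((\<lambda>p. Suc p mod L) ` P) < card Q"
    using \<open>Q \<subseteq> {..<L}\<close> finite_subset by (blast intro: psubset_card_mono)
  moreover have "card ((\<lambda>p. Suc p mod L) ` P) = card P"
    using inj_on_Suc_mod[of L] \<open>P \<subseteq> {..<L}\<close> by (blast intro: card_image inj_on_subset)
  ultimately show ?thesis by simp
qed

text \<open>\<open>balance (drop j t)\<close> is \<open>z\<^sub>k(t) - u\<^sub>k(t)\<close> for \<open>k = length t - j\<close>.\<close>

definition balance :: "bool list \<Rightarrow> int" where
  "balance xs = int (length (filter (\<lambda>b. \<not> b) xs)) - int (length (filter (\<lambda>b. b) xs))"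

lemma balance_Nil [simp]: "balance [] = 0"
  by (simp add: balance_def)

lemma balance_snoc [simp]: "balance (xs @ [b]) = balance xs + (if b then -1 else 1)"
  by (simp add: balance_def)

lemma balance_drop_snoc:
  "balance (drop (min j (length t)) (t @ [b])) = balance (drop j t) + (if b then -1 else 1)"
  by (simp add: min_def)

lemma length_filter_drop:
  "length (filter P (drop a t)) = card {x. a < x \<and> x \<le> length t \<and> P (t ! (x - 1))}"
proof (cases "a \<le> length t")
  case True
  have "length (filter P (drop a t)) = card {i. i < length t - a \<and> P (t ! (a + i))}"
    using True by (simp add: length_filter_conv_card)
  also have "\<dots> = card ((\<lambda>i. Suc (a + i)) ` {i. i < length t - a \<and> P (t ! (a + i))})"
    by (rule card_image[symmetric]) (simp add: inj_on_def)
  also have "(\<lambda>i. Suc (a + i)) ` {i. i < length t - a \<and> P (t ! (a + i))} =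
      {x. a < x \<and> x \<le> length t \<and> P (t ! (x - 1))}"
  proof (intro equalityI subsetI)
    fix x assume "x \<in> {x. a < x \<and> x \<le> length t \<and> P (t ! (x - 1))}"
    then show "x \<in> (\<lambda>i. Suc (a + i)) ` {i. i < length t - a \<and> P (t ! (a + i))}"
      by (intro rev_image_eqI[of "x - a - 1"]) auto
  qed auto
  finally show ?thesis .
qed simp

lemma h_eq_0_iff: "h t = 0 \<longleftrightarrow> (\<forall>j. balance (drop j t) \<le> 0)"
proof -
  have "{int (zeros k t) - int (ones k t) | k. k \<le> length t} =
      (\<lambda>k. balance (drop (length t - k) t)) ` {..length t}"
    by (auto simp: zeros_def ones_def balance_def tail_k_def)
  also have "\<dots> = (\<lambda>j. balance (drop j t)) ` (\<lambda>k. length t - k) ` {..length t}"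
    by (simp add: image_image)
  also have "(\<lambda>k. length t - k) ` {..length t} = {..length t}"
  proof (intro equalityI subsetI)
    fix j assume "j \<in> {..length t}"
    then show "j \<in> (\<lambda>k. length t - k) ` {..length t}"
      by (intro rev_image_eqI[of "length t - j"]) auto
  qed auto
  finally have h_Max: "h t = Max ((\<lambda>j. balance (drop j t)) ` {..length t})"
    by (simp add: h_def)
  have "h t \<ge> balance (drop (length t) t)"
    unfolding h_Max by (rule Max_ge) (auto simp del: drop_all)
  then have "h t = 0 \<longleftrightarrow> h t \<le> 0"
    by simp
  also have "\<dots> \<longleftrightarrow> (\<forall>j \<le> length t. balance (drop j t) \<le> 0)"
    unfolding h_Max by (subst Max_le_iff) auto
  also have "\<dots> \<longleftrightarrow> (\<forall>j. balance (drop j t) \<le> 0)"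
    by (metis balance_Nil drop_all nle_le)
  finally show ?thesis .
qed

lemma tg_vertices_snoc: "tg_vertices (t @ [b]) = insert (Suc (length t)) (tg_vertices t)"
  by (auto simp: tg_vertices_def)

lemma tg_adj_sym: "tg_adj s x y \<longleftrightarrow> tg_adj s y x"
  by (auto simp: tg_adj_def max.commute)

lemma tg_adj_append: "tg_adj t x y \<Longrightarrow> tg_adj (t @ u) x y"
  by (auto simp: tg_adj_def tg_vertices_def nth_append max_def)

lemma tg_adj_snoc_dominating:
  assumes "x \<in> tg_vertices t"
  shows "tg_adj (t @ [True]) x (Suc (length t)) \<and> tg_adj (t @ [True]) (Suc (length t)) x"
  using assms by (auto simp: tg_adj_def tg_vertices_def max_def)

lemma tg_adj_isolated:
  assumes "tg_adj s x y" and "\<not> s ! (x - 1)"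
  shows "x < y" and "y \<le> length s" and "s ! (y - 1)"
  using assms by (auto simp: tg_adj_def tg_vertices_def max_def split: if_splits)

lemma threshold_path_cover:
  assumes "\<forall>j. balance (drop j t) < int r"
  shows "\<exists>ps. path_cover (tg_adj t) (tg_vertices t) ps \<and> length ps \<le> r"
  using assms
proof (induction t arbitrary: r rule: rev_induct)
  case Nil
  then have "r \<ge> 1" by simp
  moreover have "path_cover (tg_adj []) (tg_vertices []) [[0]]"
    by (simp add: path_cover_def tg_vertices_def)
  ultimately show ?case by fastforce
next
  case (snoc b t)
  let ?w = "Suc (length t)"
  have w: "?w \<notin> tg_vertices t"
    by (simp add: tg_vertices_def)
  have bound: "balance (drop j t) < int r + (if b then 1 else -1)" for j
  proof -
    have "balance (drop (min j (length t)) (t @ [b])) < int r"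
      using snoc.prems by blast
    then show ?thesis
      unfolding balance_drop_snoc by (cases b) simp_all
  qed
  have mono: "path_cover (tg_adj (t @ [b])) (tg_vertices t) ps"
    if "path_cover (tg_adj t) (tg_vertices t) ps" for ps
    using that by (rule path_cover_mono) (rule tg_adj_append)
  show ?case
  proof (cases b)
    case True
    have "\<forall>j. balance (drop j t) < int (r + 1)"
      using bound True by (simp add: add.commute)
    with snoc.IH obtain ps where ps: "path_cover (tg_adj t) (tg_vertices t) ps" "length ps \<le> r + 1"
      by blast
    obtain ps' where "path_cover (tg_adj (t @ [b])) (insert ?w (tg_vertices t)) ps'"
      and "length ps' \<le> max 1 (length ps - 1)"
      using path_cover_insert_dominating[OF mono[OF ps(1)] w] tg_adj_snoc_dominating True by auto
    moreover have "r \<ge> 1"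
      using snoc.prems[rule_format, of "?w"] by simp
    ultimately show ?thesis
      using ps(2) by (auto simp: tg_vertices_snoc)
  next
    case False
    have "r \<ge> 2"
      using bound[of "length t"] False by simp
    then have "\<forall>j. balance (drop j t) < int (r - 1)"
      using bound False by auto
    with snoc.IH obtain ps where ps: "path_cover (tg_adj t) (tg_vertices t) ps" "length ps \<le> r - 1"
      by blast
    have "path_cover (tg_adj (t @ [b])) (insert ?w (tg_vertices t)) (ps @ [[?w]])"
      using path_cover_insert_isolated[OF mono[OF ps(1)] w] .
    with ps(2) \<open>r \<ge> 2\<close> show ?thesis
      by (auto simp: tg_vertices_snoc)
  qed
qed

lemma hamiltonian_snoc_dominating:
  assumes "t \<noteq> []" and "\<forall>j. balance (drop j t) \<le> 0"
  shows "hamiltonian (tg_vertices (t @ [True])) (tg_adj (t @ [True]))"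
proof -
  have "\<forall>j. balance (drop j t) < int 1"
    using assms(2) by (metis le_less_trans of_nat_1 zero_less_one)
  then obtain ps where ps: "path_cover (tg_adj t) (tg_vertices t) ps" "length ps \<le> 1"
    using threshold_path_cover by blast
  moreover have "ps \<noteq> []"
    using ps(1) by (auto simp: path_cover_def tg_vertices_def)
  ultimately obtain p where "path_cover (tg_adj t) (tg_vertices t) [p]"
    by (cases ps) auto
  then have "path_cover (tg_adj (t @ [True])) (tg_vertices t) [p]"
    by (rule path_cover_mono) (rule tg_adj_append)
  moreover have "card (tg_vertices t) \<ge> 2"
    using assms(1) by (cases t) (simp_all add: tg_vertices_def)
  ultimately show ?thesis
    unfolding tg_vertices_snoc
    by (rule hamiltonian_insert_dominating) (auto simp: tg_vertices_def tg_adj_snoc_dominating)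
qed

lemma balance_drop_neg_if_hamiltonian:
  assumes "hamiltonian (tg_vertices s) (tg_adj s)" and "a < length s"
  shows "balance (drop a s) < 0"
proof -
  obtain c where c: "distinct c" "set c = tg_vertices s"
    and cycle: "\<And>i. i < length c \<Longrightarrow> tg_adj s (c ! i) (c ! (Suc i mod length c))"
    using hamiltonianE[OF assms(1)] by blast
  define I where "I = {x. a < x \<and> x \<le> length s \<and> \<not> s ! (x - 1)}"
  define D where "D = {x. a < x \<and> x \<le> length s \<and> s ! (x - 1)}"
  define pos where "pos X = {i. i < length c \<and> c ! i \<in> X}" for X
  have neighbour: "y \<in> D" if "tg_adj s x y" "x \<in> I" for x y
    using tg_adj_isolated[OF that(1)] that(2) by (auto simp: I_def D_def)
  have position: "\<exists>i < length c. c ! i = x" if "x \<le> length s" for x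
    using that c(2) by (auto simp: tg_vertices_def in_set_conv_nth)
  obtain i where i: "i < length c" "c ! i = Suc a"
    using position[of "Suc a"] assms(2) by auto
  obtain j where j: "j < length c" "c ! j = 0"
    using position[of 0] by auto
  have "card (pos I) < card (pos D)"
  proof (rule card_lt_card_if_flanked_in_cycle)
    show "pos I \<subseteq> {..<length c}" "pos D \<subseteq> {..<length c}"
      by (auto simp: pos_def)
    show "i \<in> pos I \<union> pos D" "j \<notin> pos I \<union> pos D"
      using i j assms(2) by (auto simp: pos_def I_def D_def)
    show "Suc p mod length c \<in> pos D" if "p \<in> pos I" for p
    proof -
      have "p < length c" "c ! p \<in> I"
        using that by (simp_all add: pos_def)
      then have "c ! (Suc p mod length c) \<in> D"
        by (blast intro: neighbour cycle)
      with \<open>p < length c\<close> show ?thesis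
        by (auto simp: pos_def intro: mod_less_divisor)
    qed
    show "p \<in> pos D" if "p < length c" "Suc p mod length c \<in> pos I" for p
    proof -
      have "tg_adj s (c ! (Suc p mod length c)) (c ! p)"
        using cycle[OF that(1)] tg_adj_sym by blast
      moreover have "c ! (Suc p mod length c) \<in> I"
        using that(2) by (simp add: pos_def)
      ultimately have "c ! p \<in> D"
        by (rule neighbour)
      with that(1) show ?thesis
        by (simp add: pos_def)
    qed
  qed fact+
  moreover have "card (pos X) = card X" if "X \<subseteq> {..length s}" for X
    unfolding pos_def using card_positions[OF c(1)] that c(2)
    by (simp add: tg_vertices_def atLeast0AtMost)
  moreover have "I \<subseteq> {..length s}" "D \<subseteq> {..length s}"
    by (auto simp: I_def D_def)
  ultimately have "card I < card D"
    by simp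
  moreover have "balance (drop a s) = int (card I) - int (card D)"
    by (simp add: balance_def length_filter_drop I_def D_def)
  ultimately show ?thesis
    by simp
qed

lemma hamiltonian_snoc_iff:
  assumes "t \<noteq> []"
  shows "hamiltonian (tg_vertices (t @ [b])) (tg_adj (t @ [b])) \<longleftrightarrow>
    b \<and> (\<forall>j. balance (drop j t) \<le> 0)"
proof
  assume ham: "hamiltonian (tg_vertices (t @ [b])) (tg_adj (t @ [b]))"
  have neg: "balance (drop j t) + (if b then -1 else 1) < 0" for j
  proof -
    have "balance (drop (min j (length t)) (t @ [b])) < 0"
      by (rule balance_drop_neg_if_hamiltonian[OF ham]) simp
    then show ?thesis
      unfolding balance_drop_snoc .
  qed
  from neg[of "length t"] have b
    by (cases b) simp_all
  moreover have "balance (drop j t) \<le> 0" for j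
    using neg[of j] \<open>b\<close> by simp
  ultimately show "b \<and> (\<forall>j. balance (drop j t) \<le> 0)"
    by blast
next
  assume "b \<and> (\<forall>j. balance (drop j t) \<le> 0)"
  then show "hamiltonian (tg_vertices (t @ [b])) (tg_adj (t @ [b]))"
    using hamiltonian_snoc_dominating[OF assms] by simp
qed

theorem mainTheorem8:
  fixes s :: "bool list" and n :: nat
  assumes "n \<ge> 3" and "length s = n - 1"
  shows "hamiltonian (tg_vertices s) (tg_adj s) \<longleftrightarrow>
         (s ! (n - 2) = True \<and> h (take (n - 2) s) = 0)"
proof -
  define t where "t = take (n - 2) s"
  have "length s = Suc (n - 2)"
    using assms by simp
  then have s: "t @ [s ! (n - 2)] = s"
    using take_Suc_conv_app_nth[of "n - 2" s] by (simp add: t_def)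
  have "t \<noteq> []"
    using \<open>length s = Suc (n - 2)\<close> assms(1) by (auto simp: t_def)
  have "hamiltonian (tg_vertices s) (tg_adj s) \<longleftrightarrow>
      s ! (n - 2) \<and> (\<forall>j. balance (drop j t) \<le> 0)"
    using hamiltonian_snoc_iff[OF \<open>t \<noteq> []\<close>, of "s ! (n - 2)"] unfolding s .
  then show ?thesis
    by (simp add: h_eq_0_iff t_def)
qed

end
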